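(* Let $p(0)\in\mathcal M_1^+$ be such that all coefficients $a(p(0))_k$, $k\in\mathbb N_0$, are finite, let $p(t+1)=\mathcal R_1(p(t))$ for $t\in\mathbb N_0$, and put $a_k(t)=a(p(t))_k$ and $\alpha=a_1(0)$. Then $\lim_{t\to\infty}a_k(t)=\alpha^k$ for all $k\ge0$.
   Context: $\mathcal M_1^+$ is the set of probability measures on $\mathbb N_0$, identified with nonnegative sequences summing to $1$. $\mathcal R_1(p)_i=\sum_{k,\ell\ge0,\ k+\ell\ge i}\frac{1+\min\{k,\ell,i,k+\ell-i\}}{(k+1)(\ell+1)}p_kp_\ell$. For $p\in\mathcal M_1^+$, $a(p)_k=\frac{1}{k+1}\sum_{\ell\ge k}\binom{\ell}{k}p_\ell\in[0,\infty]$ (so $a(p)_0=1$ and $a(p)_1=\frac12\sum_\ell \ell p_\ell$). *)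

theory Defs
  imports "HOL-Analysis.Analysis"
begin

definition M1plus :: "(nat \<Rightarrow> real) set" where
  "M1plus = {p. (\<forall>k. 0 \<le> p k) \<and> p sums 1}"

definition R1 :: "(nat \<Rightarrow> real) \<Rightarrow> nat \<Rightarrow> real" where
  "R1 p i = (\<Sum>\<^sub>\<infinity>(k, l)\<in>{(k, l). i \<le> k + l}.
      (1 + real (min (min k l) (min i (k + l - i)))) / (real (k + 1) * real (l + 1)) * p k * p l)"

definition acoef :: "(nat \<Rightarrow> real) \<Rightarrow> nat \<Rightarrow> ennreal" where
  "acoef p k = ennreal (1 / (real k + 1)) *
      (\<Sum>\<^sub>\<infinity>l\<in>{k..}. ennreal (real (l choose k) * p l))"

end

theory Submission
  imports Defs
begin

(* For q in M1plus and Z with law q, a(q)_m = E (Z choose m) / (m + 1). Now R_1 p is the law of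
   X + Y, where K, L are independent with law p and, given them, X and Y are independent and
   uniform on {0..K} and {0..L}; by the hockey-stick identity E (X choose j) = a(p)_j. Vandermonde's
   identity expands (X + Y choose m) into products of binomial moments of X and Y, whence
     a_m(t+1) = 1/(m+1) * (SUM j<=m. a_j(t) * a_(m-j)(t)).
   So a_0 = 1 and a_1 = alpha are conserved, and for k >= 2
     a_k(t+1) = 2/(k+1) * a_k(t) + (terms in a_1(t), ..., a_(k-1)(t)),
   an affine contraction whose forcing term tends, by induction on k, to (k-1)/(k+1) * alpha^k;
   its fixed point is alpha^k. *)

lemma open_separates_below:
  fixes y :: "'a::linorder_topology"
  assumes "open W" "y \<in> W"
  obtains U V where "open U" "open V" "y \<in> U" "U \<inter> V = {}" "{..<y} - W \<subseteq> V"
proof (cases "\<exists>z. z < y")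
  case True
  then obtain a where a: "a < y" "{a<..y} \<subseteq> W"
    using open_left[OF assms] by blast
  show ?thesis
  proof (cases "\<exists>b. a < b \<and> b < y")
    case True
    then obtain b where b: "a < b" "b < y" by blast
    have "{..<y} - W \<subseteq> {..<b}"
    proof
      fix x assume x: "x \<in> {..<y} - W"
      show "x \<in> {..<b}"
      proof (rule ccontr)
        assume "x \<notin> {..<b}"
        with b(1) x have "x \<in> {a<..y}" by (auto simp: not_less less_imp_le intro: less_le_trans)
        with x a(2) show False by blast
      qed
    qed
    with b show ?thesis by (intro that[of "{b<..}" "{..<b}"]) auto
  next
    case False
    then have "{a<..} \<inter> {..<y} = {}" by auto
    with a show ?thesis by (intro that[of "{a<..}" "{..<y}"]) auto
  qed
next
  case False
  then show ?thesis by (intro that[of UNIV "{}"]) auto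
qed

lemma open_separates_above:
  fixes y :: "'a::linorder_topology"
  assumes "open W" "y \<in> W"
  obtains U V where "open U" "open V" "y \<in> U" "U \<inter> V = {}" "{y<..} - W \<subseteq> V"
proof (cases "\<exists>z. y < z")
  case True
  then obtain a where a: "y < a" "{y..<a} \<subseteq> W"
    using open_right[OF assms] by blast
  show ?thesis
  proof (cases "\<exists>b. y < b \<and> b < a")
    case True
    then obtain b where b: "y < b" "b < a" by blast
    have "{y<..} - W \<subseteq> {b<..}"
    proof
      fix x assume x: "x \<in> {y<..} - W"
      show "x \<in> {b<..}"
      proof (rule ccontr)
        assume "x \<notin> {b<..}"
        with b(2) x have "x \<in> {y..<a}" by (auto simp: not_less less_imp_le intro: le_less_trans)
        with x a(2) show False by blast
      qed
    qed
    with b show ?thesis by (intro that[of "{..<b}" "{b<..}"]) auto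
  next
    case False
    then have "{..<a} \<inter> {y<..} = {}" by auto
    with a show ?thesis by (intro that[of "{..<a}" "{y<..}"]) auto
  qed
next
  case False
  then show ?thesis by (intro that[of UNIV "{}"]) auto
qed

(* Needed for has_sum_SigmaD, i.e. Fubini for unconditional sums in ennreal. *)
instance linorder_topology \<subseteq> t3_space
proof
  fix S and y :: 'a assume "closed S" "y \<notin> S"
  then have W: "open (- S)" "y \<in> - S" by auto
  obtain U1 V1 where 1: "open U1" "open V1" "y \<in> U1" "U1 \<inter> V1 = {}" "{..<y} - (- S) \<subseteq> V1"
    using open_separates_below[OF W] .
  obtain U2 V2 where 2: "open U2" "open V2" "y \<in> U2" "U2 \<inter> V2 = {}" "{y<..} - (- S) \<subseteq> V2"
    using open_separates_above[OF W] .
  have "S \<subseteq> V1 \<union> V2"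
  proof
    fix x assume "x \<in> S"
    with \<open>y \<notin> S\<close> have "x < y \<or> y < x" by (metis linorder_neqE)
    with \<open>x \<in> S\<close> 1(5) 2(5) show "x \<in> V1 \<union> V2" by auto
  qed
  moreover have "U1 \<inter> U2 \<inter> (V1 \<union> V2) = {}" using 1(4) 2(4) by blast
  ultimately show "\<exists>U V. open U \<and> open V \<and> y \<in> U \<and> S \<subseteq> V \<and> U \<inter> V = {}"
    using 1 2 by (intro exI[of _ "U1 \<inter> U2"] exI[of _ "V1 \<union> V2"]) auto
qed

(* The library fact summable_on_ennreal is shadowed by its enat companion. *)
lemma ennreal_summable_on [simp]: "(f :: 'a \<Rightarrow> ennreal) summable_on A"
  by (simp add: nonneg_summable_on_complete)

lemma infsum_cmult_right_ennreal:
  "(\<Sum>\<^sub>\<infinity>x\<in>A. c * f x) = c * (\<Sum>\<^sub>\<infinity>x\<in>A. f x :: ennreal)"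
  by (simp add: nonneg_infsum_complete SUP_mult_left_ennreal sum_distrib_left)

lemma infsum_Sigma_ennreal:
  "infsum (f :: 'a \<times> 'b \<Rightarrow> ennreal) (Sigma A B) = (\<Sum>\<^sub>\<infinity>x\<in>A. \<Sum>\<^sub>\<infinity>y\<in>B x. f (x, y))"
  by (rule infsumI[symmetric], rule has_sum_SigmaD[where f = f and B = B]) auto

lemma infsum_swap_ennreal:
  "(\<Sum>\<^sub>\<infinity>x\<in>A. \<Sum>\<^sub>\<infinity>y\<in>B. f x y) = (\<Sum>\<^sub>\<infinity>y\<in>B. \<Sum>\<^sub>\<infinity>x\<in>A. f x y :: ennreal)"
proof -
  have "(\<Sum>\<^sub>\<infinity>x\<in>A. \<Sum>\<^sub>\<infinity>y\<in>B. f x y) = (\<Sum>\<^sub>\<infinity>(x, y)\<in>A \<times> B. f x y)"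
    by (simp add: infsum_Sigma_ennreal)
  also have "\<dots> = (\<Sum>\<^sub>\<infinity>(y, x)\<in>B \<times> A. f x y)"
  proof -
    have "((\<lambda>(x, y). f x y) has_sum (\<Sum>\<^sub>\<infinity>(x, y)\<in>A \<times> B. f x y)) (A \<times> B)"
      by simp
    then have "((\<lambda>(y, x). f x y) has_sum (\<Sum>\<^sub>\<infinity>(x, y)\<in>A \<times> B. f x y)) (B \<times> A)"
      by (subst (asm) has_sum_swap) simp
    then show ?thesis by (rule infsumI[symmetric])
  qed
  also have "\<dots> = (\<Sum>\<^sub>\<infinity>y\<in>B. \<Sum>\<^sub>\<infinity>x\<in>A. f x y)"
    by (simp add: infsum_Sigma_ennreal)
  finally show ?thesis .
qed

lemma infsum_sum_ennreal:
  "finite J \<Longrightarrow> (\<Sum>\<^sub>\<infinity>x\<in>A. \<Sum>j\<in>J. f j x) = (\<Sum>j\<in>J. \<Sum>\<^sub>\<infinity>x\<in>A. f j x :: ennreal)"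
  by (induction J rule: finite_induct) (simp_all add: infsum_add)

lemma infsum_product_ennreal:
  "(\<Sum>\<^sub>\<infinity>(x, y)\<in>A \<times> B. f x * g y) = (\<Sum>\<^sub>\<infinity>x\<in>A. f x) * (\<Sum>\<^sub>\<infinity>y\<in>B. g y :: ennreal)"
proof -
  have "(\<Sum>\<^sub>\<infinity>(x, y)\<in>A \<times> B. f x * g y) = (\<Sum>\<^sub>\<infinity>x\<in>A. f x * (\<Sum>\<^sub>\<infinity>y\<in>B. g y))"
    by (simp add: infsum_Sigma_ennreal infsum_cmult_right_ennreal)
  also have "\<dots> = (\<Sum>\<^sub>\<infinity>y\<in>B. g y) * (\<Sum>\<^sub>\<infinity>x\<in>A. f x)"
    by (simp add: mult.commute[of "f _"] infsum_cmult_right_ennreal)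
  finally show ?thesis by (simp add: mult.commute)
qed

lemma has_sum_ennreal:
  fixes g :: "'a \<Rightarrow> real"
  assumes "(g has_sum s) A" and "\<And>x. x \<in> A \<Longrightarrow> 0 \<le> g x"
  shows "((\<lambda>x. ennreal (g x)) has_sum ennreal s) A"
  using has_sum_comm_additive_general[of A ennreal g s] assms
  by (auto simp: o_def subset_eq intro: sum_ennreal)

lemma ennreal_infsum_real:
  fixes g :: "'a \<Rightarrow> real"
  assumes nonneg: "\<And>x. x \<in> A \<Longrightarrow> 0 \<le> g x" and finite: "(\<Sum>\<^sub>\<infinity>x\<in>A. ennreal (g x)) < \<infinity>"
  shows "ennreal (infsum g A) = (\<Sum>\<^sub>\<infinity>x\<in>A. ennreal (g x))"
proof -
  have "g summable_on A"
  proof (rule nonneg_bdd_above_summable_on)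
    show "bdd_above (sum g ` {F. F \<subseteq> A \<and> finite F})"
    proof (rule bdd_aboveI2)
      fix F assume "F \<in> {F. F \<subseteq> A \<and> finite F}"
      then have F: "F \<subseteq> A" "finite F" by auto
      have "ennreal (sum g F) = (\<Sum>\<^sub>\<infinity>x\<in>F. ennreal (g x))"
        using F nonneg by (simp add: subset_eq sum_ennreal)
      also have "\<dots> \<le> (\<Sum>\<^sub>\<infinity>x\<in>A. ennreal (g x))"
        using F by (intro infsum_mono_neutral) auto
      finally have "enn2real (ennreal (sum g F)) \<le> enn2real (\<Sum>\<^sub>\<infinity>x\<in>A. ennreal (g x))"
        using finite by (intro enn2real_mono) simp_all
      then show "sum g F \<le> enn2real (\<Sum>\<^sub>\<infinity>x\<in>A. ennreal (g x))"
        using F nonneg by (simp add: subset_eq sum_nonneg)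
    qed
  qed (use nonneg in auto)
  then have "((\<lambda>x. ennreal (g x)) has_sum ennreal (infsum g A)) A"
    using nonneg by (intro has_sum_ennreal has_sum_infsum)
  then show ?thesis
    by (rule infsumI[symmetric])
qed

lemma card_diagonal_fiber:
  assumes "i \<le> k + l"
  shows "card ({..k} \<inter> {x. x \<le> i \<and> i \<le> x + l}) = 1 + min (min k l) (min i (k + l - i))"
proof -
  have "{..k} \<inter> {x. x \<le> i \<and> i \<le> x + l} = {i - l..min k i}" by auto
  moreover have "Suc (min k i) - (i - l) = 1 + min (min k l) (min i (k + l - i))"
    using assms by (cases "i \<le> l"; cases "k \<le> i"; cases "k \<le> l"; simp add: min_def; arith)
  ultimately show ?thesis by simp
qed

lemma sum_grid_diagonals:
  fixes f :: "nat \<Rightarrow> 'a::comm_semiring_1"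
  shows "(\<Sum>x\<le>k. \<Sum>y\<le>l. f (x + y)) = (\<Sum>i\<le>k + l. f i * of_nat (1 + min (min k l) (min i (k + l - i))))"
proof -
  have row: "(\<Sum>y\<le>l. f (x + y)) = (\<Sum>i\<le>k + l. if x \<le> i \<and> i \<le> x + l then f i else 0)" if "x \<le> k" for x
  proof -
    have "(\<Sum>y\<le>l. f (x + y)) = (\<Sum>i\<in>{x..x + l}. f i)"
      by (rule sum.reindex_bij_witness[where i = "\<lambda>i. i - x" and j = "\<lambda>y. x + y"]) auto
    also have "\<dots> = (\<Sum>i\<in>{..k + l} \<inter> {i. x \<le> i \<and> i \<le> x + l}. f i)"
      using that by (intro sum.cong) auto
    finally show ?thesis by (simp add: sum.inter_restrict)
  qed
  have "(\<Sum>x\<le>k. \<Sum>y\<le>l. f (x + y)) = (\<Sum>i\<le>k + l. \<Sum>x\<le>k. if x \<le> i \<and> i \<le> x + l then f i else 0)"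
    by (simp add: row sum.swap[of _ "{..k}"])
  also have "\<dots> = (\<Sum>i\<le>k + l. f i * of_nat (1 + min (min k l) (min i (k + l - i))))"
    by (intro sum.cong refl) (simp add: sum.If_cases card_diagonal_fiber mult.commute)
  finally show ?thesis .
qed

lemma sum_grid_choose:
  "(\<Sum>x\<le>k. \<Sum>y\<le>l. (x + y) choose m) = (\<Sum>j\<le>m. (Suc k choose Suc j) * (Suc l choose Suc (m - j)))"
proof -
  have "(\<Sum>x\<le>k. \<Sum>y\<le>l. (x + y) choose m) = (\<Sum>x\<le>k. \<Sum>y\<le>l. \<Sum>j\<le>m. (x choose j) * (y choose (m - j)))"
    by (simp add: vandermonde)
  also have "\<dots> = (\<Sum>j\<le>m. (\<Sum>x\<le>k. x choose j) * (\<Sum>y\<le>l. y choose (m - j)))"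
    by (simp add: sum_product sum.swap[of _ "{..m}"])
  also have "\<dots> = (\<Sum>j\<le>m. (Suc k choose Suc j) * (Suc l choose Suc (m - j)))"
    by (simp add: sum_choose_upper)
  finally show ?thesis .
qed

(* By sum_grid_diagonals, 1 + min (min k l) (min i (k + l - i)) counts the pairs (x, y) in
   {..k} \<times> {..l} with x + y = i, so R1_weight i k l is the probability that X + Y = i for
   independent X, Y uniform on {..k} and {..l}. *)
definition R1_weight :: "nat \<Rightarrow> nat \<Rightarrow> nat \<Rightarrow> real" where
  "R1_weight i k l = (if i \<le> k + l then
     (1 + real (min (min k l) (min i (k + l - i)))) / (real (k + 1) * real (l + 1)) else 0)"

definition acoef_weight :: "nat \<Rightarrow> nat \<Rightarrow> real" where
  "acoef_weight j k = real (k choose j) / real (j + 1)"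

lemma R1_weight_nonneg: "0 \<le> R1_weight i k l"
  by (simp add: R1_weight_def)

lemma R1_weight_le_1: "R1_weight i k l \<le> 1"
proof -
  have "1 + real (min (min k l) (min i (k + l - i))) \<le> real (k + 1) * 1" by simp
  also have "\<dots> \<le> real (k + 1) * real (l + 1)" by (intro mult_left_mono) auto
  finally show ?thesis by (simp add: R1_weight_def)
qed

lemma acoef_weight_nonneg: "0 \<le> acoef_weight j k"
  by (simp add: acoef_weight_def)

lemma acoef_weight_conv_choose_Suc: "acoef_weight j k = real (Suc k choose Suc j) / real (Suc k)"
proof -
  have "real (Suc k) * real (k choose j) = real (Suc k choose Suc j) * real (Suc j)"
    by (metis Suc_times_binomial_eq of_nat_mult)
  then show ?thesis by (simp add: acoef_weight_def field_simps)
qed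

lemma sum_choose_R1_weight:
  "(\<Sum>i\<le>k + l. real (i choose m) * R1_weight i k l) = (\<Sum>j\<le>m. acoef_weight j k * acoef_weight (m - j) l)"
proof -
  have "(\<Sum>i\<le>k + l. real (i choose m) * R1_weight i k l) =
      real (\<Sum>i\<le>k + l. (i choose m) * (1 + min (min k l) (min i (k + l - i)))) / (real (k + 1) * real (l + 1))"
    by (simp add: R1_weight_def sum_divide_distrib distrib_left)
  also have "\<dots> = real (\<Sum>x\<le>k. \<Sum>y\<le>l. (x + y) choose m) / (real (k + 1) * real (l + 1))"
    by (simp only: sum_grid_diagonals[where f = "\<lambda>i. i choose m"] of_nat_id)
  also have "\<dots> = (\<Sum>j\<le>m. real (Suc k choose Suc j) / real (Suc k) * (real (Suc l choose Suc (m - j)) / real (Suc l)))"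
    by (simp add: sum_grid_choose sum_divide_distrib)
  finally show ?thesis by (simp add: acoef_weight_conv_choose_Suc)
qed

lemma acoef_0: "acoef p 0 = (\<Sum>\<^sub>\<infinity>k. ennreal (p k))"
  by (simp add: acoef_def)

lemma acoef_eq_infsum_weight:
  assumes "\<And>k. 0 \<le> p k"
  shows "acoef p j = (\<Sum>\<^sub>\<infinity>k. ennreal (acoef_weight j k * p k))"
proof -
  have "acoef p j = (\<Sum>\<^sub>\<infinity>k\<in>{j..}. ennreal (acoef_weight j k * p k))"
    unfolding acoef_def using assms
    by (simp add: flip: infsum_cmult_right_ennreal ennreal_mult) (simp add: acoef_weight_def add.commute)
  also have "\<dots> = (\<Sum>\<^sub>\<infinity>k. ennreal (acoef_weight j k * p k))"
    by (intro infsum_cong_neutral) (auto simp: acoef_weight_def binomial_eq_0)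
  finally show ?thesis .
qed

lemma R1_eq_infsum_weight: "R1 p i = (\<Sum>\<^sub>\<infinity>(k, l). R1_weight i k l * p k * p l)"
  unfolding R1_def by (intro infsum_cong_neutral) (auto simp: R1_weight_def)

lemma R1_nonneg:
  assumes "\<And>k. 0 \<le> p k"
  shows "0 \<le> R1 p i"
  unfolding R1_eq_infsum_weight using assms by (intro infsum_nonneg) (auto simp: R1_weight_nonneg)

lemma ennreal_R1:
  assumes nonneg: "\<And>k. 0 \<le> p k" and finite: "acoef p 0 < \<infinity>"
  shows "ennreal (R1 p i) = (\<Sum>\<^sub>\<infinity>(k, l). ennreal (R1_weight i k l * p k * p l))"
proof -
  have "(\<Sum>\<^sub>\<infinity>(k, l). ennreal (R1_weight i k l * p k * p l)) \<le> (\<Sum>\<^sub>\<infinity>(k, l). ennreal (p k) * ennreal (p l))"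
    using nonneg R1_weight_le_1 R1_weight_nonneg
    by (intro infsum_mono) (auto simp: ennreal_mult[symmetric] intro!: mult_right_mono mult_left_le_one_le)
  also have "\<dots> = acoef p 0 * acoef p 0"
    using infsum_product_ennreal[of "\<lambda>k. ennreal (p k)" "\<lambda>k. ennreal (p k)" UNIV UNIV]
    by (simp add: acoef_0)
  also have "\<dots> < \<infinity>"
    using finite by (simp add: ennreal_mult_less_top)
  finally show ?thesis
    unfolding R1_eq_infsum_weight
    using ennreal_infsum_real[of UNIV "\<lambda>(k, l). R1_weight i k l * p k * p l"] nonneg R1_weight_nonneg
    by (simp add: case_prod_unfold)
qed

lemma infsum_choose_R1_weight:
  assumes "\<And>k. 0 \<le> p k"
  shows "(\<Sum>\<^sub>\<infinity>i. ennreal (real (i choose m) * (R1_weight i k l * p k * p l))) =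
    (\<Sum>j\<le>m. ennreal (acoef_weight j k * p k) * ennreal (acoef_weight (m - j) l * p l))"
proof -
  have "(\<Sum>\<^sub>\<infinity>i. ennreal (real (i choose m) * (R1_weight i k l * p k * p l))) =
      (\<Sum>\<^sub>\<infinity>i\<in>{..k + l}. ennreal (real (i choose m) * (R1_weight i k l * p k * p l)))"
    by (intro infsum_cong_neutral) (auto simp: R1_weight_def)
  also have "\<dots> = ennreal (\<Sum>i\<le>k + l. real (i choose m) * R1_weight i k l * (p k * p l))"
    using assms R1_weight_nonneg by (simp add: mult.assoc)
  also have "\<dots> = ennreal (\<Sum>j\<le>m. acoef_weight j k * p k * (acoef_weight (m - j) l * p l))"
    by (simp only: sum_distrib_right[symmetric] sum_choose_R1_weight) (simp add: sum_distrib_left sum_distrib_right mult_ac)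
  also have "\<dots> = (\<Sum>j\<le>m. ennreal (acoef_weight j k * p k) * ennreal (acoef_weight (m - j) l * p l))"
    using assms acoef_weight_nonneg
    by (subst sum_ennreal[symmetric]) (auto simp: ennreal_mult intro!: sum.cong)
  finally show ?thesis .
qed

lemma acoef_R1:
  assumes nonneg: "\<And>k. 0 \<le> p k" and finite: "acoef p 0 < \<infinity>"
  shows "acoef (R1 p) m = ennreal (1 / (real m + 1)) * (\<Sum>j\<le>m. acoef p j * acoef p (m - j))"
proof -
  have "(\<Sum>\<^sub>\<infinity>i\<in>{m..}. ennreal (real (i choose m) * R1 p i)) =
      (\<Sum>\<^sub>\<infinity>i. ennreal (real (i choose m)) * ennreal (R1 p i))"
    using R1_nonneg[OF nonneg] by (intro infsum_cong_neutral) (auto simp: binomial_eq_0 ennreal_mult)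
  also have "\<dots> = (\<Sum>\<^sub>\<infinity>i. \<Sum>\<^sub>\<infinity>(k, l). ennreal (real (i choose m) * (R1_weight i k l * p k * p l)))"
    using nonneg R1_weight_nonneg
    by (simp add: ennreal_R1[OF nonneg finite] ennreal_mult case_prod_unfold
        flip: infsum_cmult_right_ennreal)
  also have "\<dots> = (\<Sum>\<^sub>\<infinity>(k, l). \<Sum>\<^sub>\<infinity>i. ennreal (real (i choose m) * (R1_weight i k l * p k * p l)))"
    using infsum_swap_ennreal[of "\<lambda>i (k, l). ennreal (real (i choose m) * (R1_weight i k l * p k * p l))"]
    by (simp add: case_prod_unfold)
  also have "\<dots> = (\<Sum>\<^sub>\<infinity>(k, l). \<Sum>j\<le>m. ennreal (acoef_weight j k * p k) * ennreal (acoef_weight (m - j) l * p l))"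
    by (intro infsum_cong, clarify, rule infsum_choose_R1_weight[OF nonneg])
  also have "\<dots> = (\<Sum>j\<le>m. \<Sum>\<^sub>\<infinity>(k, l). ennreal (acoef_weight j k * p k) * ennreal (acoef_weight (m - j) l * p l))"
    by (simp add: infsum_sum_ennreal case_prod_unfold)
  also have "\<dots> = (\<Sum>j\<le>m. acoef p j * acoef p (m - j))"
    by (intro sum.cong refl)
      (simp add: infsum_product_ennreal[of _ _ UNIV UNIV, simplified] acoef_eq_infsum_weight[OF nonneg])
  finally show ?thesis
    by (simp add: acoef_def)
qed

lemma acoef_R1_finite:
  assumes "\<And>k. 0 \<le> p k" and "\<And>k. acoef p k < \<infinity>"
  shows "acoef (R1 p) m < \<infinity>"
  using assms by (simp add: acoef_R1 ennreal_mult_less_top less_top ennreal_mult_eq_top_iff)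

lemma enn2real_acoef_R1:
  assumes nonneg: "\<And>k. 0 \<le> p k" and finite: "\<And>k. acoef p k < \<infinity>"
  shows "enn2real (acoef (R1 p) m) =
    1 / (real m + 1) * (\<Sum>j\<le>m. enn2real (acoef p j) * enn2real (acoef p (m - j)))"
  using finite by (simp add: acoef_R1[OF nonneg finite] enn2real_mult enn2real_sum ennreal_mult_less_top)

lemma acoef_0_M1plus:
  assumes "p \<in> M1plus"
  shows "acoef p 0 = 1"
proof -
  have "(p has_sum 1) UNIV"
    using assms by (intro sums_nonneg_imp_has_sum) (auto simp: M1plus_def)
  then show ?thesis
    using assms by (auto simp: acoef_0 M1plus_def dest!: has_sum_ennreal intro: infsumI)
qed

lemma LIMSEQ_zero_contraction:
  fixes y e :: "nat \<Rightarrow> real"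
  assumes r: "0 \<le> r" "r < 1" and e: "e \<longlonglongrightarrow> 0"
    and step: "\<And>t. \<bar>y (Suc t)\<bar> \<le> r * \<bar>y t\<bar> + \<bar>e t\<bar>"
  shows "y \<longlonglongrightarrow> 0"
proof (rule LIMSEQ_I)
  fix \<epsilon> :: real assume "0 < \<epsilon>"
  with r have "0 < (1 - r) * (\<epsilon> / 2)" by simp
  with e obtain N where N: "\<And>t. N \<le> t \<Longrightarrow> \<bar>e t\<bar> < (1 - r) * (\<epsilon> / 2)"
    by (metis LIMSEQ_D diff_zero real_norm_def)
  have bound: "\<bar>y (N + n)\<bar> \<le> r ^ n * \<bar>y N\<bar> + \<epsilon> / 2" for n
  proof (induction n)
    case 0
    then show ?case using \<open>0 < \<epsilon>\<close> by simp
  next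
    case (Suc n)
    have "\<bar>y (N + Suc n)\<bar> \<le> r * \<bar>y (N + n)\<bar> + (1 - r) * (\<epsilon> / 2)"
      using step[of "N + n"] N[of "N + n"] by simp
    also have "\<dots> \<le> r * (r ^ n * \<bar>y N\<bar> + \<epsilon> / 2) + (1 - r) * (\<epsilon> / 2)"
      using Suc.IH r(1) by (simp add: mult_left_mono)
    also have "\<dots> = r ^ Suc n * \<bar>y N\<bar> + \<epsilon> / 2"
      by (simp add: field_simps)
    finally show ?case .
  qed
  have "(\<lambda>n. r ^ n * \<bar>y N\<bar>) \<longlonglongrightarrow> 0"
    using r by (intro tendsto_mult_left_zero LIMSEQ_power_zero) auto
  with \<open>0 < \<epsilon>\<close> obtain M where M: "\<And>n. M \<le> n \<Longrightarrow> r ^ n * \<bar>y N\<bar> < \<epsilon> / 2"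
    by (metis LIMSEQ_D diff_zero half_gt_zero real_norm_def abs_less_iff)
  show "\<exists>M'. \<forall>n\<ge>M'. norm (y n - 0) < \<epsilon>"
  proof (intro exI allI impI)
    fix n assume "N + M \<le> n"
    then have "\<bar>y n\<bar> \<le> r ^ (n - N) * \<bar>y N\<bar> + \<epsilon> / 2" "r ^ (n - N) * \<bar>y N\<bar> < \<epsilon> / 2"
      using bound[of "n - N"] M[of "n - N"] by auto
    then show "norm (y n - 0) < \<epsilon>" by simp
  qed
qed

lemma LIMSEQ_affine_contraction:
  fixes x c :: "nat \<Rightarrow> real"
  assumes r: "0 \<le> r" "r < 1" and c: "c \<longlonglongrightarrow> L"
    and step: "\<And>t. x (Suc t) = r * x t + c t"
  shows "x \<longlonglongrightarrow> L / (1 - r)"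
proof -
  define y where "y t = x t - L / (1 - r)" for t
  have "y (Suc t) = r * y t + (c t - L)" for t
    using step[of t] r by (simp add: y_def field_simps)
  then have "\<bar>y (Suc t)\<bar> \<le> r * \<bar>y t\<bar> + \<bar>c t - L\<bar>" for t
    using r abs_triangle_ineq[of "r * y t" "c t - L"] by (simp add: abs_mult)
  moreover have "(\<lambda>t. c t - L) \<longlonglongrightarrow> 0"
    using c by (simp add: LIM_zero)
  ultimately have "y \<longlonglongrightarrow> 0"
    using LIMSEQ_zero_contraction[OF r] by blast
  then show ?thesis
    unfolding y_def by (rule LIM_zero_cancel)
qed

lemma convolution_iteration_limit:
  fixes a :: "nat \<Rightarrow> nat \<Rightarrow> real"
  assumes step: "\<And>t m. a (Suc t) m = 1 / (real m + 1) * (\<Sum>j\<le>m. a t j * a t (m - j))"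
    and init: "a 0 0 = 1"
  shows "(\<lambda>t. a t k) \<longlonglongrightarrow> a 0 1 ^ k"
proof -
  have a0: "a t 0 = 1" for t
    by (induction t) (simp_all add: init step)
  have a1: "a t 1 = a 0 1" for t
    by (induction t) (simp_all add: step a0)
  show ?thesis
  proof (induction k rule: less_induct)
    case (less k)
    show ?case
    proof (cases "k \<le> 1")
      case True
      with a0 a1 have "(\<lambda>t. a t k) = (\<lambda>t. a 0 1 ^ k)"
        by (fastforce simp: le_Suc_eq)
      then show ?thesis by simp
    next
      case False
      define c where "c t = 1 / (real k + 1) * (\<Sum>j\<in>{1..<k}. a t j * a t (k - j))" for t
      have "{..k} = insert 0 (insert k {1..<k})" using False by auto
      then have "a (Suc t) k = 1 / (real k + 1) * (2 * a t k + (\<Sum>j\<in>{1..<k}. a t j * a t (k - j)))" for t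
        using False by (simp add: step a0)
      then have "a (Suc t) k = 2 / (real k + 1) * a t k + c t" for t
        by (simp add: c_def distrib_left)
      moreover have "c \<longlonglongrightarrow> 1 / (real k + 1) * (\<Sum>j\<in>{1..<k}. a 0 1 ^ j * a 0 1 ^ (k - j))"
        unfolding c_def by (intro tendsto_intros less.IH) auto
      moreover have "(\<Sum>j\<in>{1..<k}. a 0 1 ^ j * a 0 1 ^ (k - j)) = (real k - 1) * a 0 1 ^ k"
        using False by (simp add: power_add[symmetric])
      ultimately have "(\<lambda>t. a t k) \<longlonglongrightarrow> 1 / (real k + 1) * ((real k - 1) * a 0 1 ^ k) / (1 - 2 / (real k + 1))"
        using False by (intro LIMSEQ_affine_contraction) auto
      also have "1 / (real k + 1) * ((real k - 1) * a 0 1 ^ k) / (1 - 2 / (real k + 1)) = a 0 1 ^ k"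
      proof -
        have "1 - 2 / (real k + 1) = (real k - 1) / (real k + 1)"
          by (simp add: field_simps)
        moreover have "real k - 1 \<noteq> 0" using False by simp
        ultimately show ?thesis by simp
      qed
      finally show ?thesis .
    qed
  qed
qed

theorem proposition11:
  fixes p :: "nat \<Rightarrow> nat \<Rightarrow> real"
  assumes "p 0 \<in> M1plus"
    and "\<forall>k. acoef (p 0) k < \<infinity>"
    and "\<forall>t. p (Suc t) = R1 (p t)"
  shows "\<forall>k. (\<lambda>t. acoef (p t) k) \<longlonglongrightarrow> (acoef (p 0) 1) ^ k"
proof -
  have invariant: "(\<forall>k. 0 \<le> p t k) \<and> (\<forall>k. acoef (p t) k < \<infinity>)" for t
  proof (induction t)
    case 0
    then show ?case using assms(1,2) by (simp add: M1plus_def)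
  next
    case (Suc t)
    then have nonneg: "\<And>k. 0 \<le> p t k" and finite: "\<And>k. acoef (p t) k < \<infinity>" by auto
    show ?case
      using R1_nonneg[OF nonneg] acoef_R1_finite[OF nonneg finite] assms(3) by simp
  qed
  define a where "a t k = enn2real (acoef (p t) k)" for t k
  have "a (Suc t) m = 1 / (real m + 1) * (\<Sum>j\<le>m. a t j * a t (m - j))" for t m
    using invariant assms(3) by (simp add: a_def enn2real_acoef_R1)
  moreover have "a 0 0 = 1"
    using acoef_0_M1plus[OF assms(1)] by (simp add: a_def)
  ultimately have "(\<lambda>t. a t k) \<longlonglongrightarrow> a 0 1 ^ k" for k
    by (rule convolution_iteration_limit)
  moreover have "acoef (p t) k = ennreal (a t k)" for t k
    using invariant by (simp add: a_def less_top)
  moreover have "0 \<le> a 0 1"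
    by (simp add: a_def)
  ultimately show ?thesis
    by (simp add: ennreal_power)
qed

end
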